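(* Let $E$ be a Dedekind complete Riesz space with conditional expectation operator $T$, weak order unit $e$ with $Te=e$, and a filtration $(T_i)_{i\ge0}$ compatible with $T$. Let $(f_i)_{i\in\mathbb{N}}$ be a sequence in $E$ adapted to $(T_i)$ (i.e. $f_i\in\mathcal{R}(T_i)$) which is $e$-uniformly bounded, i.e. there is $B>0$ with $|f_i|\le Be$ for all $i$. Put $g_i:=f_i-T_{i-1}f_i$. Then $(g_i,T_i)$ is a martingale difference sequence (i.e. $g_i\in\mathcal{R}(T_i)$ and $T_ig_{i+1}=0$ for all $i$), and $$T\Big|\frac1n\sum_{i=1}^n g_i\Big|\to0\quad\text{(in order) as } n\to\infty.$$
   Context: A conditional expectation operator on a Dedekind complete Riesz space $E$ with a weak order unit is a positive, order continuous linear projection $T:E\to E$ which maps weak order units to weak order units and whose range $\mathcal{R}(T)$ is a Dedekind complete Riesz subspace of $E$. A filtration is a sequence $(T_i)$ of conditional expectations with $T_iT_j=T_i=T_jT_i$ for $i\le j$; it is compatible with $T$ if $T_iT=T=TT_i$ for all $i$. *)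

theory Defs
  imports Complex_Main
begin

text \<open>A Dedekind complete Riesz space is modelled as a type of class
  ordered_real_vector (ordered real vector space) whose order is a
  conditionally complete lattice (every nonempty set bounded above has a supremum).\<close>

definition riesz_abs :: "'a::{ordered_real_vector, lattice} \<Rightarrow> 'a" where
  "riesz_abs x = sup x (- x)"

definition weak_order_unit :: "'a::{ordered_real_vector, lattice} \<Rightarrow> bool" where
  "weak_order_unit e \<longleftrightarrow> 0 \<le> e \<and> (\<forall>x. inf (riesz_abs x) e = 0 \<longrightarrow> x = 0)"

definition positive_op :: "('a::ordered_real_vector \<Rightarrow> 'a) \<Rightarrow> bool" where
  "positive_op T \<longleftrightarrow> (\<forall>x. 0 \<le> x \<longrightarrow> 0 \<le> T x)"

definition order_continuous :: "('a::{ordered_real_vector, conditionally_complete_lattice} \<Rightarrow> 'a) \<Rightarrow> bool" where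
  "order_continuous T \<longleftrightarrow>
     (\<forall>D. D \<noteq> {} \<and> (\<forall>x\<in>D. \<forall>y\<in>D. \<exists>z\<in>D. z \<le> x \<and> z \<le> y) \<and> (\<forall>x\<in>D. 0 \<le> x) \<and> Inf D = 0
          \<longrightarrow> Inf (T ` D) = 0)"

definition riesz_subspace :: "'a::{ordered_real_vector, lattice} set \<Rightarrow> bool" where
  "riesz_subspace S \<longleftrightarrow> 0 \<in> S \<and> (\<forall>x\<in>S. \<forall>y\<in>S. x + y \<in> S) \<and> (\<forall>x\<in>S. \<forall>c. c *\<^sub>R x \<in> S)
     \<and> (\<forall>x\<in>S. \<forall>y\<in>S. sup x y \<in> S \<and> inf x y \<in> S)"

definition dedekind_complete_riesz_subspace :: "'a::{ordered_real_vector, lattice} set \<Rightarrow> bool" where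
  "dedekind_complete_riesz_subspace S \<longleftrightarrow> riesz_subspace S \<and>
     (\<forall>A. A \<subseteq> S \<and> A \<noteq> {} \<and> (\<exists>u\<in>S. \<forall>a\<in>A. a \<le> u) \<longrightarrow>
        (\<exists>s\<in>S. (\<forall>a\<in>A. a \<le> s) \<and> (\<forall>u\<in>S. (\<forall>a\<in>A. a \<le> u) \<longrightarrow> s \<le> u)))"

definition cond_expectation :: "('a::{ordered_real_vector, conditionally_complete_lattice} \<Rightarrow> 'a) \<Rightarrow> bool" where
  "cond_expectation T \<longleftrightarrow> linear T \<and> positive_op T \<and> order_continuous T \<and> T \<circ> T = T
     \<and> (\<forall>w. weak_order_unit w \<longrightarrow> weak_order_unit (T w))
     \<and> dedekind_complete_riesz_subspace (range T)"

definition filtration :: "(nat \<Rightarrow> 'a::{ordered_real_vector, conditionally_complete_lattice} \<Rightarrow> 'a) \<Rightarrow> bool" where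
  "filtration Ts \<longleftrightarrow> (\<forall>i. cond_expectation (Ts i)) \<and>
     (\<forall>i j. i \<le> j \<longrightarrow> Ts i \<circ> Ts j = Ts i \<and> Ts j \<circ> Ts i = Ts i)"

definition filtration_compatible :: "(nat \<Rightarrow> 'a \<Rightarrow> 'a) \<Rightarrow> ('a \<Rightarrow> 'a) \<Rightarrow> bool" where
  "filtration_compatible Ts T \<longleftrightarrow> (\<forall>i. Ts i \<circ> T = T \<and> T \<circ> Ts i = T)"

definition order_converges :: "(nat \<Rightarrow> 'a::{ordered_real_vector, conditionally_complete_lattice}) \<Rightarrow> 'a \<Rightarrow> bool" where
  "order_converges x l \<longleftrightarrow> (\<exists>p. decseq p \<and> (\<forall>n. 0 \<le> p n) \<and> Inf (range p) = 0 \<and> (\<forall>n. riesz_abs (x n - l) \<le> p n))"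

end

theory Submission
  imports Defs "HOL-Library.Lattice_Algebras"
begin

text \<open>
  For the averages let |g_i| \<le> c e and use the potential
  Phi_m(x) = (\<Sum>j<m. |x - 2cj e|), a discrete analogue of the local-time argument for |x|.
  If z lies in the range of a conditional expectation Q, Q y = 0 and |y| \<le> c e, then
  Q |z + y| \<le> |z| + 2 (c e - |z|)^+: conditioning raises |z + y| by at most twice a tent of
  height c e centred at 0. Tents centred 2c e apart are disjoint, so they sum to at most c e,
  whence T_n Phi_m(S_n + g_(n+1)) \<le> Phi_m(S_n) + 2c e for the partial sums S_n. Iterating under T
  and using m |x| \<le> Phi_m(x) + 2cm^2 e gives m T|S_n| \<le> (4cm^2 + 2cn) e, so
  T|S_n / n| \<le> (6c/m) e as soon as m^2 \<le> n. The Archimedean property of the Dedekind complete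
  space turns this into order convergence to 0.
\<close>

section \<open>Lattice-ordered vector spaces\<close>

interpretation riesz: lattice_ab_group_add_abs riesz_abs "(+)" "0::'a::{ordered_real_vector, lattice}"
  "(-)" uminus "(\<le>)" "(<)" inf sup
  by unfold_locales (simp add: riesz_abs_def)

lemma riesz_abs_eq_pprt_add_pprt_minus:
  "riesz_abs x = riesz.pprt x + riesz.pprt (- (x::'a::{ordered_real_vector, lattice}))"
  by (simp add: riesz.abs_prts riesz.nprt_neg[of "- x", simplified])

lemma scaleR_sup_nonneg:
  fixes a b :: "'a::{ordered_real_vector, lattice}"
  assumes "0 \<le> r"
  shows "r *\<^sub>R sup a b = sup (r *\<^sub>R a) (r *\<^sub>R b)"
proof (cases "r = 0")
  case False
  with assms have r: "0 < r" by simp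
  show ?thesis
  proof (rule antisym)
    have "a \<le> inverse r *\<^sub>R sup (r *\<^sub>R a) (r *\<^sub>R b)" "b \<le> inverse r *\<^sub>R sup (r *\<^sub>R a) (r *\<^sub>R b)"
      using scaleR_left_mono[of "r *\<^sub>R _" "sup (r *\<^sub>R a) (r *\<^sub>R b)" "inverse r"] r by simp_all
    then have "sup a b \<le> inverse r *\<^sub>R sup (r *\<^sub>R a) (r *\<^sub>R b)" by simp
    from scaleR_left_mono[OF this assms] r show "r *\<^sub>R sup a b \<le> sup (r *\<^sub>R a) (r *\<^sub>R b)"
      by simp
  qed (simp add: scaleR_left_mono assms)
qed simp

lemma riesz_abs_scaleR_nonneg:
  "0 \<le> r \<Longrightarrow> riesz_abs (r *\<^sub>R x) = r *\<^sub>R riesz_abs (x::'a::{ordered_real_vector, lattice})"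
  by (simp add: riesz_abs_def scaleR_sup_nonneg)

lemma riesz_abs_scaleR_of_nonneg:
  fixes e :: "'a::{ordered_real_vector, lattice}"
  assumes "0 \<le> e"
  shows "riesz_abs (r *\<^sub>R e) = \<bar>r\<bar> *\<^sub>R e"
proof (cases "0 \<le> r")
  case False
  have "riesz_abs (r *\<^sub>R e) = riesz_abs ((- r) *\<^sub>R e)"
    by (metis riesz.abs_minus_cancel scaleR_minus_left)
  also have "\<dots> = \<bar>r\<bar> *\<^sub>R e"
    using False assms by (simp only: riesz_abs_scaleR_nonneg riesz.abs_of_nonneg) simp
  finally show ?thesis .
qed (simp add: riesz_abs_scaleR_nonneg riesz.abs_of_nonneg assms)

lemma inf_add_le_add_inf:
  fixes u v w :: "'a::{ordered_real_vector, lattice}"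
  assumes "0 \<le> u" "0 \<le> v" "0 \<le> w"
  shows "inf u (v + w) \<le> inf u v + inf u w"
proof -
  define t where "t = inf u v"
  have "inf (u - t) (v - t) = inf u v - t"
    using riesz.add_inf_distrib_right[of u v "- t"] by simp
  then have disjoint: "inf (u - t) (v - t) = 0"
    by (simp add: t_def)
  have "inf u (v + w) - t = inf (u - t) (v - t + w)"
    using riesz.add_inf_distrib_right[of u "v + w" "- t"] by (simp add: algebra_simps)
  also have "\<dots> \<le> inf (inf (u - t + w) (v - t + w)) u"
    using assms by (auto intro: le_infI1 simp: add_increasing2 t_def)
  also have "\<dots> = inf w u"
    by (simp add: disjoint flip: riesz.add_inf_distrib_right)
  finally show ?thesis
    by (metis add.commute diff_le_eq inf_commute t_def)
qed

lemma inf_sup_le_sup_inf: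
  fixes x y z :: "'a::{ordered_real_vector, lattice}"
  shows "inf x (sup y z) \<le> sup (inf x y) (inf x z)"
proof -
  define t where "t = inf x (inf y z)"
  have inf_diff: "inf (a - t) (b - t) = inf a b - t" and sup_diff: "sup (a - t) (b - t) = sup a b - t"
    for a b
    using riesz.add_inf_distrib_right[of a b "- t"] riesz.add_sup_distrib_right[of a b "- t"]
    by simp_all
  have nonneg: "0 \<le> x - t" "0 \<le> y - t" "0 \<le> z - t"
    unfolding diff_ge_0_iff_ge t_def by (meson inf_le1 inf_le2 order_trans)+
  have "inf x (sup y z) - t = inf (x - t) (sup (y - t) (z - t))"
    by (simp add: inf_diff sup_diff)
  also have "\<dots> \<le> inf (x - t) ((y - t) + (z - t))"
    using nonneg by (intro inf_mono) (simp_all add: add_increasing add_increasing2)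
  also have "\<dots> \<le> inf (x - t) (y - t) + inf (x - t) (z - t)"
    using nonneg by (rule inf_add_le_add_inf)
  also have "\<dots> = sup (inf (x - t) (y - t)) (inf (x - t) (z - t))
      + inf (inf (x - t) (y - t)) (inf (x - t) (z - t))"
    by (rule riesz.add_eq_inf_sup)
  also have "inf (inf (x - t) (y - t)) (inf (x - t) (z - t)) = inf (x - t) (inf (y - t) (z - t))"
    by (simp only: inf_aci)
  also have "\<dots> = 0"
    unfolding inf_diff unfolding t_def by (rule diff_self)
  finally show ?thesis
    by (simp add: inf_diff sup_diff)
qed

interpretation riesz: distrib_lattice inf "(\<le>) :: 'a::{ordered_real_vector, lattice} \<Rightarrow> _" "(<)" sup
  by unfold_locales (rule distrib_imp1, intro antisym inf_sup_le_sup_inf distrib_inf_le)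

lemma pprt_sub_pprt_minus: "riesz.pprt x - riesz.pprt (- x) = (x::'a::{ordered_real_vector, lattice})"
  using riesz.prts[of x] riesz.nprt_neg[of "- x"] by simp

lemma inf_pprt_minus_pprt: "inf (riesz.pprt (- x)) (riesz.pprt (x::'a::{ordered_real_vector, lattice})) = 0"
proof -
  have "inf (riesz.pprt (- x)) (riesz.pprt x) = inf (riesz.pprt (- x) + 0) (riesz.pprt (- x) + x)"
    using pprt_sub_pprt_minus[of x] by (simp add: algebra_simps)
  also have "\<dots> = riesz.pprt (- x) + riesz.nprt x"
    by (simp only: riesz.nprt_def riesz.add_inf_distrib_left inf_commute)
  finally show ?thesis
    by (simp add: riesz.pprt_neg)
qed

lemma inf_sum_le_sum_inf:
  fixes u :: "'a::{ordered_real_vector, lattice}"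
  assumes "finite J" "0 \<le> u" "\<forall>j\<in>J. 0 \<le> b j"
  shows "inf u (sum b J) \<le> (\<Sum>j\<in>J. inf u (b j))"
  using assms(1,3)
proof (induction J rule: finite_induct)
  case (insert i F)
  have "inf u (sum b (insert i F)) = inf u (b i + sum b F)"
    using insert by simp
  also have "\<dots> \<le> inf u (b i) + inf u (sum b F)"
    using insert assms(2) by (intro inf_add_le_add_inf) (simp_all add: sum_nonneg)
  also have "\<dots> \<le> inf u (b i) + (\<Sum>j\<in>F. inf u (b j))"
    using insert by (simp add: add_left_mono)
  finally show ?case
    using insert by simp
qed simp

lemma sum_pairwise_disjoint_le:
  fixes K :: "'a::{ordered_real_vector, lattice}"
  assumes "finite J" "0 \<le> K" "\<forall>j\<in>J. 0 \<le> b j \<and> b j \<le> K"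
    and "pairwise (\<lambda>i j. inf (b i) (b j) = 0) J"
  shows "sum b J \<le> K"
  using assms(1,3,4)
proof (induction J rule: finite_induct)
  case empty
  with assms(2) show ?case by simp
next
  case (insert i F)
  have "inf (b i) (sum b F) \<le> (\<Sum>j\<in>F. inf (b i) (b j))"
    using insert by (intro inf_sum_le_sum_inf) auto
  also have "\<dots> = 0"
    using insert by (intro sum.neutral) (auto simp: pairwise_insert)
  finally have "inf (b i) (sum b F) = 0"
    using insert by (intro antisym) (auto intro: sum_nonneg)
  then have "sum b (insert i F) = sup (b i) (sum b F)"
    using insert riesz.add_eq_inf_sup[of "b i" "sum b F"] by simp
  also have "\<dots> \<le> K"
    using insert by (auto simp: pairwise_insert)
  finally show ?case .
qed

section \<open>Tents and the one-step estimate\<close>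

definition tent :: "'a::{ordered_real_vector, lattice} \<Rightarrow> 'a \<Rightarrow> 'a" where
  "tent w x = riesz.pprt (w - riesz_abs x)"

lemma tent_le: "0 \<le> w \<Longrightarrow> tent w x \<le> w"
  unfolding tent_def using riesz.pprt_mono[of "w - riesz_abs x" w] by simp

lemma tents_disjoint:
  fixes x e :: "'a::{ordered_real_vector, lattice}"
  assumes "0 \<le> e" and "2 * c \<le> \<bar>a - b\<bar>"
  shows "inf (tent (c *\<^sub>R e) (x - a *\<^sub>R e)) (tent (c *\<^sub>R e) (x - b *\<^sub>R e)) = 0"
proof -
  have "(2 * c) *\<^sub>R e \<le> \<bar>a - b\<bar> *\<^sub>R e"
    using assms(2,1) by (rule scaleR_right_mono)
  also have "\<dots> = riesz_abs ((x - b *\<^sub>R e) - (x - a *\<^sub>R e))"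
    using assms(1) by (simp add: riesz_abs_scaleR_of_nonneg algebra_simps flip: scaleR_diff_left)
  also have "\<dots> \<le> riesz_abs (x - a *\<^sub>R e) + riesz_abs (x - b *\<^sub>R e)"
    by (metis riesz.abs_minus_commute riesz.abs_triangle_ineq4)
  finally have "c *\<^sub>R e - riesz_abs (x - a *\<^sub>R e) \<le> - (c *\<^sub>R e - riesz_abs (x - b *\<^sub>R e))"
    by (simp add: algebra_simps scaleR_2 flip: scaleR_scaleR)
  then have "inf (tent (c *\<^sub>R e) (x - a *\<^sub>R e)) (tent (c *\<^sub>R e) (x - b *\<^sub>R e))
      \<le> inf (riesz.pprt (- (c *\<^sub>R e - riesz_abs (x - b *\<^sub>R e)))) (tent (c *\<^sub>R e) (x - b *\<^sub>R e))"
    unfolding tent_def by (intro inf_mono riesz.pprt_mono) simp_all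
  then show ?thesis
    unfolding tent_def inf_pprt_minus_pprt by (intro antisym) simp_all
qed

lemma sum_tents_le:
  fixes x e :: "'a::{ordered_real_vector, lattice}"
  assumes "0 \<le> e" and "0 \<le> c"
  shows "(\<Sum>j<m. tent (c *\<^sub>R e) (x - (2 * c * real j) *\<^sub>R e)) \<le> c *\<^sub>R e"
proof (rule sum_pairwise_disjoint_le)
  have "0 \<le> c *\<^sub>R e"
    using assms by (simp add: scaleR_nonneg_nonneg)
  then show "0 \<le> c *\<^sub>R e" "\<forall>j\<in>{..<m}. 0 \<le> tent (c *\<^sub>R e) (x - (2 * c * real j) *\<^sub>R e)
      \<and> tent (c *\<^sub>R e) (x - (2 * c * real j) *\<^sub>R e) \<le> c *\<^sub>R e"
    by (auto simp: tent_le) (simp add: tent_def)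
  have "2 * c \<le> \<bar>2 * c * real i - 2 * c * real j\<bar>" if "i \<noteq> j" for i j :: nat
  proof -
    have "2 * c * 1 \<le> 2 * c * \<bar>real i - real j\<bar>"
      using that assms(2) by (intro mult_left_mono) auto
    then show ?thesis
      using assms(2) by (simp add: abs_mult flip: right_diff_distrib)
  qed
  then show "pairwise (\<lambda>i j. inf (tent (c *\<^sub>R e) (x - (2 * c * real i) *\<^sub>R e))
      (tent (c *\<^sub>R e) (x - (2 * c * real j) *\<^sub>R e)) = 0) {..<m}"
    using assms(1) by (auto simp: pairwise_def intro: tents_disjoint)
qed simp

lemma add_twice_pprt_diff:
  "x + 2 *\<^sub>R riesz.pprt (w - x) = sup x (2 *\<^sub>R w - (x::'a::{ordered_real_vector, lattice}))"
proof -
  have "x + 2 *\<^sub>R riesz.pprt (w - x) = x + sup (2 *\<^sub>R w - 2 *\<^sub>R x) 0"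
    by (simp add: riesz.pprt_def scaleR_sup_nonneg scaleR_diff_right)
  also have "\<dots> = sup x (2 *\<^sub>R w - x)"
    by (simp add: riesz.add_sup_distrib_left sup_commute scaleR_2 algebra_simps)
  finally show ?thesis .
qed

lemma inf_sup_reflections_le:
  fixes z v :: "'a::{ordered_real_vector, lattice}"
  shows "inf (sup z (v - z)) (sup (- z) (v + z)) \<le> sup (riesz_abs z) (v - riesz_abs z)"
proof -
  have "inf (v - z) (v + z) = v - riesz_abs z"
    using riesz.add_inf_distrib_left[of v "- z" z]
    by (simp add: riesz_abs_def riesz.neg_sup_eq_inf inf_commute)
  moreover have "inf z (- z) \<le> riesz_abs z" "inf z (v + z) \<le> riesz_abs z" "inf (v - z) (- z) \<le> riesz_abs z"
    by (meson inf_le1 inf_le2 order_trans riesz.abs_ge_self riesz.abs_ge_minus_self)+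
  ultimately show ?thesis
    by (simp add: riesz.inf_sup_distrib1 riesz.inf_sup_distrib2 le_supI1 le_supI2)
qed

lemma positive_linear_mono:
  assumes "linear Q" "positive_op Q" "x \<le> (y::'a::{ordered_real_vector, lattice})"
  shows "Q x \<le> Q y"
proof -
  have "0 \<le> Q (y - x)"
    using assms unfolding positive_op_def by simp
  then show ?thesis
    by (simp add: linear_diff[OF assms(1)])
qed

lemma positive_linear_abs_le:
  assumes "linear Q" "positive_op Q"
  shows "riesz_abs (Q x) \<le> Q (riesz_abs (x::'a::{ordered_real_vector, lattice}))"
  using positive_linear_mono[OF assms riesz.abs_ge_self[of x]]
    positive_linear_mono[OF assms riesz.abs_ge_minus_self[of x]]
  by (simp add: riesz.abs_le_iff linear_neg[OF assms(1)])

lemma riesz_subspace_closed: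
  assumes "riesz_subspace (R::'a::{ordered_real_vector, lattice} set)" "x \<in> R" "y \<in> R"
  shows "x + y \<in> R" "r *\<^sub>R x \<in> R" "x - y \<in> R" "riesz.pprt x \<in> R"
proof -
  show "x + y \<in> R" "r *\<^sub>R x \<in> R"
    using assms by (auto simp: riesz_subspace_def)
  then show "x - y \<in> R"
    using assms unfolding riesz_subspace_def by (metis diff_conv_add_uminus scaleR_minus1_left)
  show "riesz.pprt x \<in> R"
    using assms unfolding riesz_subspace_def riesz.pprt_def by auto
qed

lemma projection_abs_add_le:
  fixes Q :: "'a::{ordered_real_vector, lattice} \<Rightarrow> 'a"
  assumes lin: "linear Q" and pos: "positive_op Q" and R: "riesz_subspace R"
    and QR: "\<forall>w\<in>R. Q w = w" and zR: "z \<in> R" and eR: "e \<in> R"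
    and Qy: "Q y = 0" and y: "riesz_abs y \<le> c *\<^sub>R e"
  shows "Q (riesz_abs (z + y)) \<le> riesz_abs z + 2 *\<^sub>R tent (c *\<^sub>R e) z"
proof -
  \<comment> \<open>Q|u| = z + 2 Q u^- = -z + 2 Q u^+, and u^+, u^- are dominated by positive parts of
    elements of R, which Q fixes.\<close>
  define u where "u = z + y"
  have y_le: "y \<le> c *\<^sub>R e" "- y \<le> c *\<^sub>R e"
    using y by (simp_all add: riesz.abs_le_iff)
  have fixed: "Q (riesz.pprt (z + c *\<^sub>R e)) = riesz.pprt (z + c *\<^sub>R e)"
    "Q (riesz.pprt (c *\<^sub>R e - z)) = riesz.pprt (c *\<^sub>R e - z)"
    using QR riesz_subspace_closed[OF R] zR eR by simp_all
  have "u \<le> z + c *\<^sub>R e" "- u \<le> c *\<^sub>R e - z"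
    using y_le by (simp_all add: u_def algebra_simps)
  then have pos_part: "Q (riesz.pprt u) \<le> riesz.pprt (z + c *\<^sub>R e)"
    and neg_part: "Q (riesz.pprt (- u)) \<le> riesz.pprt (c *\<^sub>R e - z)"
    using positive_linear_mono[OF lin pos riesz.pprt_mono] fixed by metis+
  have "Q (riesz.pprt u) - Q (riesz.pprt (- u)) = z"
    using pprt_sub_pprt_minus[of u] lin Qy QR zR by (simp add: u_def linear_add flip: linear_diff)
  then have split: "Q (riesz_abs u) = z + 2 *\<^sub>R Q (riesz.pprt (- u))"
    "Q (riesz_abs u) = - z + 2 *\<^sub>R Q (riesz.pprt u)"
    using lin by (simp_all add: riesz_abs_eq_pprt_add_pprt_minus linear_add scaleR_2 algebra_simps)
  have "Q (riesz_abs u) \<le> sup z (2 *\<^sub>R (c *\<^sub>R e) - z)"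
    unfolding split(1) add_twice_pprt_diff[symmetric]
    using neg_part by (intro add_left_mono scaleR_left_mono) simp_all
  moreover have "Q (riesz_abs u) \<le> sup (- z) (2 *\<^sub>R (c *\<^sub>R e) - - z)"
    unfolding split(2) add_twice_pprt_diff[symmetric]
    using pos_part by (intro add_left_mono scaleR_left_mono) (simp_all add: add.commute)
  ultimately have "Q (riesz_abs u)
      \<le> inf (sup z (2 *\<^sub>R (c *\<^sub>R e) - z)) (sup (- z) (2 *\<^sub>R (c *\<^sub>R e) + z))"
    by simp
  also have "\<dots> \<le> sup (riesz_abs z) (2 *\<^sub>R (c *\<^sub>R e) - riesz_abs z)"
    by (rule inf_sup_reflections_le)
  finally show ?thesis
    by (simp add: u_def tent_def add_twice_pprt_diff)
qed

section \<open>The potential\<close>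

definition potential :: "real \<Rightarrow> 'a::{ordered_real_vector, lattice} \<Rightarrow> nat \<Rightarrow> 'a \<Rightarrow> 'a" where
  "potential c e m x = (\<Sum>j<m. riesz_abs (x - (2 * c * real j) *\<^sub>R e))"

lemma projection_potential_add_le:
  fixes Q :: "'a::{ordered_real_vector, lattice} \<Rightarrow> 'a"
  assumes lin: "linear Q" and pos: "positive_op Q" and R: "riesz_subspace R"
    and QR: "\<forall>w\<in>R. Q w = w" and xR: "x \<in> R" and eR: "e \<in> R"
    and e: "0 \<le> e" and c: "0 \<le> c" and Qy: "Q y = 0" and y: "riesz_abs y \<le> c *\<^sub>R e"
  shows "Q (potential c e m (x + y)) \<le> potential c e m x + (2 * c) *\<^sub>R e"
proof -
  have "Q (potential c e m (x + y)) = (\<Sum>j<m. Q (riesz_abs ((x - (2 * c * real j) *\<^sub>R e) + y)))"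
    unfolding potential_def using lin by (simp add: linear_sum algebra_simps)
  also have "\<dots> \<le> (\<Sum>j<m. riesz_abs (x - (2 * c * real j) *\<^sub>R e)
      + 2 *\<^sub>R tent (c *\<^sub>R e) (x - (2 * c * real j) *\<^sub>R e))"
    using riesz_subspace_closed(2,3)[OF R] xR eR
    by (intro sum_mono projection_abs_add_le[OF lin pos R QR _ eR Qy y]) blast
  also have "\<dots> = potential c e m x + 2 *\<^sub>R (\<Sum>j<m. tent (c *\<^sub>R e) (x - (2 * c * real j) *\<^sub>R e))"
    by (simp add: potential_def sum.distrib scaleR_sum_right)
  also have "\<dots> \<le> potential c e m x + 2 *\<^sub>R (c *\<^sub>R e)"
    using sum_tents_le[OF e c] by (intro add_left_mono scaleR_left_mono) simp_all
  finally show ?thesis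
    by simp
qed

lemma potential_zero_le:
  assumes "0 \<le> e" and "0 \<le> c"
  shows "potential c e m 0 \<le> (2 * c * real m * real m) *\<^sub>R (e::'a::{ordered_real_vector, lattice})"
proof -
  have "potential c e m 0 \<le> (\<Sum>j<m. (2 * c * real m) *\<^sub>R e)"
    unfolding potential_def using assms
    by (intro sum_mono) (simp add: riesz_abs_scaleR_of_nonneg scaleR_right_mono mult_left_mono)
  then show ?thesis
    by (simp add: sum_constant_scaleR mult.commute mult.left_commute)
qed

lemma scaleR_abs_le_potential:
  assumes "0 \<le> e" and "0 \<le> c"
  shows "real m *\<^sub>R riesz_abs x
    \<le> potential c e m x + (2 * c * real m * real m) *\<^sub>R (e::'a::{ordered_real_vector, lattice})"
proof -
  have "riesz_abs x \<le> riesz_abs (x - (2 * c * real j) *\<^sub>R e) + (2 * c * real m) *\<^sub>R e"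
    if "j < m" for j
  proof -
    have "riesz_abs x \<le> riesz_abs (x - (2 * c * real j) *\<^sub>R e) + riesz_abs ((2 * c * real j) *\<^sub>R e)"
      using riesz.abs_triangle_ineq[of "x - (2 * c * real j) *\<^sub>R e" "(2 * c * real j) *\<^sub>R e"] by simp
    also have "riesz_abs ((2 * c * real j) *\<^sub>R e) \<le> (2 * c * real m) *\<^sub>R e"
      using assms that by (simp add: riesz_abs_scaleR_of_nonneg scaleR_right_mono mult_left_mono)
    finally show ?thesis
      by simp
  qed
  then have "(\<Sum>j<m. riesz_abs x)
      \<le> (\<Sum>j<m. riesz_abs (x - (2 * c * real j) *\<^sub>R e) + (2 * c * real m) *\<^sub>R e)"
    by (intro sum_mono) simp
  then show ?thesis
    by (simp add: potential_def sum.distrib sum_constant_scaleR mult.commute mult.left_commute)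
qed

section \<open>Conditional expectations, filtrations and order convergence\<close>

lemma cond_expectationD:
  assumes "cond_expectation T"
  shows "linear T" "positive_op T" "T (T x) = T x" "riesz_subspace (range T)"
  using assms unfolding cond_expectation_def dedekind_complete_riesz_subspace_def
  by (auto simp: fun_eq_iff)

lemma filtration_range_mono:
  assumes "filtration Ts" "i \<le> j" "x \<in> range (Ts i)"
  shows "x \<in> range (Ts j)"
proof -
  have "Ts j (Ts i y) = Ts i y" for y
    using assms(1,2) unfolding filtration_def by (metis comp_apply)
  with assms(3) show ?thesis
    by (metis rangeE rangeI)
qed

lemma filtration_compatibleD:
  assumes "filtration_compatible Ts T"
  shows "T (Ts i x) = T x" "Ts i (T x) = T x"
  using assms unfolding filtration_compatible_def by (metis comp_apply)+

lemma partial_sum_adapted: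
  assumes "filtration Ts" and "\<forall>i\<ge>1. g i \<in> range (Ts i)"
  shows "(\<Sum>i=1..n. g i) \<in> range (Ts n)"
proof -
  have subspace: "riesz_subspace (range (Ts k))" for k
    using assms(1) cond_expectationD(4) unfolding filtration_def by blast
  show ?thesis
  proof (induction n)
    case 0
    show ?case
      using subspace[of 0] by (simp add: riesz_subspace_def)
  next
    case (Suc n)
    then have "(\<Sum>i=1..n. g i) \<in> range (Ts (Suc n))"
      using filtration_range_mono[OF assms(1), of n "Suc n"] by simp
    with assms(2) show ?case
      using riesz_subspace_closed(1)[OF subspace] by simp
  qed
qed

lemma archimedean_bounded_multiples:
  fixes d e :: "'a::{ordered_real_vector, conditionally_complete_lattice}"
  assumes "0 \<le> d" and "\<And>n::nat. real n *\<^sub>R d \<le> e"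
  shows "d = 0"
proof -
  define A where "A = range (\<lambda>n::nat. real n *\<^sub>R d)"
  have bdd: "bdd_above A"
    unfolding A_def using assms(2) by (intro bdd_aboveI) auto
  have "real n *\<^sub>R d \<le> Sup A - d" for n :: nat
  proof -
    have "real (Suc n) *\<^sub>R d \<le> Sup A"
      using bdd unfolding A_def by (intro cSup_upper) (auto simp del: of_nat_Suc)
    then show ?thesis
      by (simp add: algebra_simps le_diff_eq)
  qed
  then have "Sup A \<le> Sup A - d"
    unfolding A_def by (intro cSup_least) auto
  with assms(1) show ?thesis
    by (simp add: le_diff_eq)
qed

lemma order_converges_zeroI:
  fixes a :: "nat \<Rightarrow> 'a::{ordered_real_vector, conditionally_complete_lattice}"
  assumes nonneg: "\<And>n. 0 \<le> a n" and bounded: "\<And>n. a n \<le> K *\<^sub>R e"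
    and eventually_small: "\<And>m. m \<ge> 1 \<Longrightarrow> \<exists>N. \<forall>n\<ge>N. a n \<le> (K / real m) *\<^sub>R e"
  shows "order_converges a 0"
proof -
  define p where "p n = Sup (a ` {n..})" for n
  have bdd: "bdd_above (a ` X)" for X
    using bounded by (intro bdd_aboveI) auto
  have a_le_p: "a n \<le> p n" for n
    unfolding p_def using bdd by (intro cSup_upper) auto
  have p_nonneg: "0 \<le> p n" for n
    using nonneg a_le_p order_trans by blast
  have "decseq p"
    unfolding decseq_def p_def by (intro allI impI cSup_subset_mono bdd) auto
  have "Inf (range p) = 0"
  proof (rule archimedean_bounded_multiples)
    have bdd_below: "bdd_below (range p)"
      using p_nonneg by (intro bdd_belowI) auto
    show "0 \<le> Inf (range p)"
      using p_nonneg by (intro cInf_greatest) auto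
    show "real m *\<^sub>R Inf (range p) \<le> K *\<^sub>R e" for m :: nat
    proof (cases "m = 0")
      case True
      then show ?thesis
        using order_trans[OF nonneg bounded] by simp
    next
      case False
      then obtain N where N: "\<forall>n\<ge>N. a n \<le> (K / real m) *\<^sub>R e"
        using eventually_small by force
      have "Inf (range p) \<le> p N"
        using bdd_below by (intro cInf_lower) auto
      also have "p N \<le> (K / real m) *\<^sub>R e"
        unfolding p_def using N by (intro cSup_least) auto
      finally have "real m *\<^sub>R Inf (range p) \<le> real m *\<^sub>R ((K / real m) *\<^sub>R e)"
        by (rule scaleR_left_mono) simp
      with False show ?thesis
        by simp
    qed
  qed
  with \<open>decseq p\<close> p_nonneg a_le_p nonneg show ?thesis
    unfolding order_converges_def by (intro exI[of _ p]) (simp add: riesz.abs_of_nonneg)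
qed

section \<open>Averages of bounded martingale differences\<close>

lemma abs_sub_projection_le:
  fixes Q :: "'a::{ordered_real_vector, lattice} \<Rightarrow> 'a"
  assumes "linear Q" "positive_op Q" "Q e = e" "riesz_abs x \<le> B *\<^sub>R e"
  shows "riesz_abs (x - Q x) \<le> (2 * B) *\<^sub>R e"
proof -
  have "riesz_abs (x - Q x) \<le> riesz_abs x + riesz_abs (Q x)"
    by (rule riesz.abs_triangle_ineq4)
  also have "\<dots> \<le> riesz_abs x + Q (riesz_abs x)"
    using positive_linear_abs_le[OF assms(1,2)] by (rule add_left_mono)
  also have "\<dots> \<le> B *\<^sub>R e + Q (B *\<^sub>R e)"
    using assms(4) positive_linear_mono[OF assms(1,2,4)] by (rule add_mono)
  finally show ?thesis
    using assms(3) by (simp add: linear_scale[OF assms(1)] scaleR_2 flip: scaleR_add_left)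
qed

locale bounded_martingale_difference =
  fixes T :: "'a::{ordered_real_vector, conditionally_complete_lattice} \<Rightarrow> 'a"
    and Ts :: "nat \<Rightarrow> 'a \<Rightarrow> 'a" and e :: 'a and g :: "nat \<Rightarrow> 'a" and c :: real
  assumes cond_exp: "cond_expectation T" and T_unit: "T e = e" and unit_nonneg: "0 \<le> e"
    and filtration: "filtration Ts" and compatible: "filtration_compatible Ts T"
    and bound_nonneg: "0 \<le> c"
    and adapted: "\<forall>i\<ge>1. g i \<in> range (Ts i)"
    and difference: "\<forall>i. Ts i (g (i + 1)) = 0"
    and bounded: "\<forall>i\<ge>1. riesz_abs (g i) \<le> c *\<^sub>R e"
begin

lemma T_linear: "linear T" and T_positive: "positive_op T"
  using cond_expectationD[OF cond_exp] by auto

lemma T_scaled_unit: "T (r *\<^sub>R e) = r *\<^sub>R e"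
  using T_unit by (simp add: linear_scale[OF T_linear])

lemma T_potential_partial_sum_le:
  "T (potential c e m (\<Sum>i=1..n. g i)) \<le> T (potential c e m 0) + (2 * c * real n) *\<^sub>R e"
proof (induction n)
  case (Suc n)
  have "cond_expectation (Ts n)"
    using filtration unfolding filtration_def by blast
  then have Ts_n: "linear (Ts n)" "positive_op (Ts n)" "riesz_subspace (range (Ts n))"
    "\<forall>w\<in>range (Ts n). Ts n w = w"
    using cond_expectationD by auto
  have "e \<in> range (Ts n)"
    using filtration_compatibleD(2)[OF compatible, of n e] T_unit by (metis rangeI)
  then have step: "Ts n (potential c e m ((\<Sum>i=1..n. g i) + g (Suc n)))
      \<le> potential c e m (\<Sum>i=1..n. g i) + (2 * c) *\<^sub>R e"
    using projection_potential_add_le[OF Ts_n partial_sum_adapted[OF filtration adapted] _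
        unit_nonneg bound_nonneg] difference bounded
    by simp
  have "T (potential c e m (\<Sum>i=1..Suc n. g i))
      = T (Ts n (potential c e m ((\<Sum>i=1..n. g i) + g (Suc n))))"
    by (simp add: filtration_compatibleD(1)[OF compatible])
  also have "\<dots> \<le> T (potential c e m (\<Sum>i=1..n. g i)) + (2 * c) *\<^sub>R e"
    using positive_linear_mono[OF T_linear T_positive step]
    by (simp add: linear_add[OF T_linear] T_scaled_unit)
  also have "\<dots> \<le> T (potential c e m 0) + (2 * c * real n) *\<^sub>R e + (2 * c) *\<^sub>R e"
    using Suc.IH by (rule add_right_mono)
  also have "\<dots> = T (potential c e m 0) + (2 * c * real (Suc n)) *\<^sub>R e"
    by (simp add: ring_distribs scaleR_add_left add.assoc)
  finally show ?case .
qed simp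

lemma T_abs_partial_sum_le:
  "real m *\<^sub>R T (riesz_abs (\<Sum>i=1..n. g i)) \<le> (4 * c * real m * real m + 2 * c * real n) *\<^sub>R e"
proof -
  define S where "S = (\<Sum>i=1..n. g i)"
  have "T (potential c e m 0) \<le> (2 * c * real m * real m) *\<^sub>R e"
    using positive_linear_mono[OF T_linear T_positive potential_zero_le[OF unit_nonneg bound_nonneg]]
    by (simp add: T_scaled_unit)
  then have potential_S: "T (potential c e m S) \<le> (2 * c * real m * real m + 2 * c * real n) *\<^sub>R e"
    using T_potential_partial_sum_le[of m n]
    unfolding S_def scaleR_add_left by (meson add_right_mono order_trans)
  have "real m *\<^sub>R T (riesz_abs S) = T (real m *\<^sub>R riesz_abs S)"
    by (simp add: linear_scale[OF T_linear])
  also have "\<dots> \<le> T (potential c e m S + (2 * c * real m * real m) *\<^sub>R e)"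
    using positive_linear_mono[OF T_linear T_positive
        scaleR_abs_le_potential[OF unit_nonneg bound_nonneg]] .
  also have "\<dots> = T (potential c e m S) + (2 * c * real m * real m) *\<^sub>R e"
    by (simp add: linear_add[OF T_linear] T_scaled_unit)
  also have "\<dots> \<le> (2 * c * real m * real m + 2 * c * real n) *\<^sub>R e + (2 * c * real m * real m) *\<^sub>R e"
    using potential_S by (rule add_right_mono)
  also have "\<dots> = (4 * c * real m * real m + 2 * c * real n) *\<^sub>R e"
    by (simp add: algebra_simps flip: scaleR_add_left)
  finally show ?thesis
    by (simp add: S_def)
qed

lemma T_abs_average_le:
  assumes "1 \<le> m" "m * m \<le> n"
  shows "T (riesz_abs ((1 / real n) *\<^sub>R (\<Sum>i=1..n. g i))) \<le> (6 * c / real m) *\<^sub>R e"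
proof -
  have "real m * real m \<le> real n"
    using assms(2) by (metis of_nat_le_iff of_nat_mult)
  then have "(4 * c * real m * real m + 2 * c * real n) *\<^sub>R e \<le> (6 * c * real n) *\<^sub>R e"
    using bound_nonneg unit_nonneg by (intro scaleR_right_mono) (simp_all add: mult_left_mono)
  with T_abs_partial_sum_le[of m n]
  have "real m *\<^sub>R T (riesz_abs (\<Sum>i=1..n. g i)) \<le> (6 * c * real n) *\<^sub>R e"
    by (rule order_trans)
  then have "(1 / (real m * real n)) *\<^sub>R (real m *\<^sub>R T (riesz_abs (\<Sum>i=1..n. g i)))
      \<le> (1 / (real m * real n)) *\<^sub>R ((6 * c * real n) *\<^sub>R e)"
    by (rule scaleR_left_mono) simp
  moreover have "1 \<le> n"
    using le_trans[OF mult_le_mono[OF assms(1) assms(1)] assms(2)] by simp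
  ultimately show ?thesis
    using assms(1) by (simp add: riesz_abs_scaleR_nonneg linear_scale[OF T_linear])
qed

lemma average_order_converges:
  "order_converges (\<lambda>n. T (riesz_abs ((1 / real n) *\<^sub>R (\<Sum>i=1..n. g i)))) 0"
proof (rule order_converges_zeroI)
  show "0 \<le> T (riesz_abs ((1 / real n) *\<^sub>R (\<Sum>i=1..n. g i)))" for n
    using T_positive by (simp add: positive_op_def)
  show "T (riesz_abs ((1 / real n) *\<^sub>R (\<Sum>i=1..n. g i))) \<le> (6 * c) *\<^sub>R e" for n
  proof (cases "n = 0")
    case True
    then show ?thesis
      using bound_nonneg unit_nonneg
      by (simp add: linear_0[OF T_linear] riesz_abs_def scaleR_nonneg_nonneg)
  next
    case False
    then show ?thesis
      using T_abs_average_le[of 1 n] by simp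
  qed
  show "\<exists>N. \<forall>n\<ge>N. T (riesz_abs ((1 / real n) *\<^sub>R (\<Sum>i=1..n. g i))) \<le> (6 * c / real m) *\<^sub>R e"
    if "1 \<le> m" for m
    using T_abs_average_le[OF that] by blast
qed

end

theorem lemma4p1:
  fixes T :: "'a::{ordered_real_vector, conditionally_complete_lattice} \<Rightarrow> 'a"
    and Ts :: "nat \<Rightarrow> 'a \<Rightarrow> 'a"
    and e :: 'a
    and f :: "nat \<Rightarrow> 'a"
    and g :: "nat \<Rightarrow> 'a"
  assumes "cond_expectation T"
    and "weak_order_unit e"
    and "T e = e"
    and "filtration Ts"
    and "filtration_compatible Ts T"
    and "\<forall>i. f i \<in> range (Ts i)"
    and "\<exists>B>0. \<forall>i. riesz_abs (f i) \<le> B *\<^sub>R e"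
    and "\<forall>i\<ge>1. g i = f i - Ts (i - 1) (f i)"
  shows "(\<forall>i\<ge>1. g i \<in> range (Ts i)) \<and> (\<forall>i. Ts i (g (i + 1)) = 0)
     \<and> order_converges (\<lambda>n. T (riesz_abs ((1 / real n) *\<^sub>R (\<Sum>i=1..n. g i)))) 0"
proof -
  obtain B where B: "B > 0" "\<forall>i. riesz_abs (f i) \<le> B *\<^sub>R e"
    using assms(7) by blast
  have Ts: "linear (Ts i)" "positive_op (Ts i)" "Ts i (Ts i x) = Ts i x"
    "riesz_subspace (range (Ts i))" "Ts i e = e" for i x
    using assms(3-5) cond_expectationD[of "Ts i"] filtration_compatibleD(2)[of Ts T i e]
    unfolding filtration_def by metis+
  interpret bounded_martingale_difference T Ts e g "2 * B"
  proof
    show "0 \<le> e"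
      using assms(2) by (simp add: weak_order_unit_def)
    show "\<forall>i\<ge>1. g i \<in> range (Ts i)"
      using assms(6,8) filtration_range_mono[OF assms(4), of "_ - 1"] riesz_subspace_closed(3)[OF Ts(4)]
      by (metis diff_le_self rangeI)
    show "\<forall>i. Ts i (g (i + 1)) = 0"
      using assms(8) Ts(3) by (simp add: linear_diff[OF Ts(1)])
    show "\<forall>i\<ge>1. riesz_abs (g i) \<le> (2 * B) *\<^sub>R e"
      using assms(8) B(2) abs_sub_projection_le[OF Ts(1,2,5)] by simp
  qed (use assms B in auto)
  show ?thesis
    using adapted difference average_order_converges by blast
qed

end
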